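(* The set of pixellated $\ell_1$-convex subsets of $\mathbb{R}^n$ is dense in the space of compact $\ell_1$-convex subsets of $\mathbb{R}^n$ with respect to the Hausdorff metric.
   Context: $Q_n=[-\tfrac12,\tfrac12]^n$ and $\mathbf{H}=\{m+\tfrac12:m\in\mathbb{Z}\}$. For $\lambda>0$, a subset of $\mathbb{R}^n$ is $\lambda$-pixellated if it is a finite union of cubes $\lambda(h+Q_n)$ with $h\in\mathbf{H}^n$; it is pixellated if it is $\lambda$-pixellated for some $\lambda>0$. A subset $Z\subseteq\mathbb{R}^n$ is $\ell_1$-convex if for all $z,z'\in Z$, with $D=\sum_i|z_i-z'_i|$, there is $\gamma\colon[0,D]\to Z$ with $\gamma(0)=z,\gamma(D)=z'$ and $\sum_i|\gamma_i(t)-\gamma_i(t')|=|t-t'|$ for all $t,t'$. The Hausdorff distance between compact sets $X,Y$ is $\inf\{\delta>0:X\subseteq Y+\delta B_n,\ Y\subseteq X+\delta B_n\}$ with $B_n$ the closed unit $\ell_1$ ball. *)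

theory Defs
  imports "HOL-Analysis.Analysis"
begin

definition l1dist :: "real^'n \<Rightarrow> real^'n \<Rightarrow> real" where
  "l1dist x y = (\<Sum>i\<in>UNIV. \<bar>x$i - y$i\<bar>)"

definition unit_cube :: "(real^'n) set" where
  "unit_cube = {x. \<forall>i. \<bar>x$i\<bar> \<le> 1/2}"

definition half_int_point :: "real^'n \<Rightarrow> bool" where
  "half_int_point h \<longleftrightarrow> (\<forall>i. \<exists>m::int. h$i = of_int m + 1/2)"

definition pixel :: "real \<Rightarrow> real^'n \<Rightarrow> (real^'n) set" where
  "pixel lam h = {lam *\<^sub>R (h + q) | q. q \<in> unit_cube}"

definition lambda_pixellated :: "real \<Rightarrow> (real^'n) set \<Rightarrow> bool" where
  "lambda_pixellated lam S \<longleftrightarrow>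
     (\<exists>F. finite F \<and> (\<forall>h\<in>F. half_int_point h) \<and> S = (\<Union>h\<in>F. pixel lam h))"

definition pixellated :: "(real^'n) set \<Rightarrow> bool" where
  "pixellated S \<longleftrightarrow> (\<exists>lam>0. lambda_pixellated lam S)"

definition l1_convex :: "(real^'n) set \<Rightarrow> bool" where
  "l1_convex Z \<longleftrightarrow> (\<forall>z\<in>Z. \<forall>z'\<in>Z. \<exists>\<gamma> :: real \<Rightarrow> real^'n.
      \<gamma> 0 = z \<and> \<gamma> (l1dist z z') = z' \<and>
      (\<forall>t\<in>{0..l1dist z z'}. \<gamma> t \<in> Z) \<and>
      (\<forall>t\<in>{0..l1dist z z'}. \<forall>t'\<in>{0..l1dist z z'}. l1dist (\<gamma> t) (\<gamma> t') = \<bar>t - t'\<bar>))"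

definition l1_ball :: "(real^'n) set" where
  "l1_ball = {x. (\<Sum>i\<in>UNIV. \<bar>x$i\<bar>) \<le> 1}"

definition l1_thicken :: "(real^'n) set \<Rightarrow> real \<Rightarrow> (real^'n) set" where
  "l1_thicken Y \<delta> = {y + \<delta> *\<^sub>R b | y b. y \<in> Y \<and> b \<in> l1_ball}"

definition l1_hausdist :: "(real^'n) set \<Rightarrow> (real^'n) set \<Rightarrow> real" where
  "l1_hausdist X Y = Inf {\<delta>. \<delta> > 0 \<and> X \<subseteq> l1_thicken Y \<delta> \<and> Y \<subseteq> l1_thicken X \<delta>}"

end

theory Submission
  imports Defs
begin

text \<open>Replace \<open>Z\<close> by the union of all \<open>\<lambda>\<close>-pixels meeting it. Each of its points lies in a
  common grid cell with a point of \<open>Z\<close> in every coordinate, so it is \<open>n\<lambda>\<close>-close to \<open>Z\<close> in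
  \<open>\<ell>\<^sub>1\<close>. For \<open>\<ell>\<^sub>1\<close>-convexity, join two such points \<open>p, p'\<close> with witnesses \<open>z, z'\<close>:
  the coordinates of an \<open>\<ell>\<^sub>1\<close>-geodesic from \<open>z\<close> to \<open>z'\<close> are monotone, and each coordinate of
  the new path follows the corresponding one monotonically while staying in its grid cell.
  A coordinatewise monotone path is an \<open>\<ell>\<^sub>1\<close>-geodesic after reparametrisation by arclength.\<close>

definition same_cell :: "real \<Rightarrow> real \<Rightarrow> real \<Rightarrow> bool" where
  "same_cell lam a b \<longleftrightarrow>
     (\<exists>m::int. a \<in> {lam * of_int m .. lam * (of_int m + 1)} \<and> b \<in> {lam * of_int m .. lam * (of_int m + 1)})"

lemma same_cell_sym: "same_cell lam a b \<Longrightarrow> same_cell lam b a"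
  unfolding same_cell_def by blast

lemma same_cell_refl:
  assumes "lam > 0"
  shows "same_cell lam a a"
proof -
  define m where "m = \<lfloor>a / lam\<rfloor>"
  have "of_int m \<le> a / lam" "a / lam \<le> of_int m + 1"
    unfolding m_def by linarith+
  hence "lam * of_int m \<le> a" "a \<le> lam * (of_int m + 1)"
    using assms by (simp_all add: field_simps)
  thus ?thesis unfolding same_cell_def by auto
qed

lemma same_cell_uminus: "same_cell lam a b \<Longrightarrow> same_cell lam (- a) (- b)"
proof -
  assume "same_cell lam a b"
  then obtain m :: int where "a \<in> {lam * of_int m .. lam * (of_int m + 1)}" "b \<in> {lam * of_int m .. lam * (of_int m + 1)}"
    unfolding same_cell_def by blast
  hence "- a \<in> {lam * of_int (- m - 1) .. lam * (of_int (- m - 1) + 1)}"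
        "- b \<in> {lam * of_int (- m - 1) .. lam * (of_int (- m - 1) + 1)}"
    by (auto simp: algebra_simps)
  thus ?thesis unfolding same_cell_def by blast
qed

lemma same_cell_dist: "same_cell lam a b \<Longrightarrow> \<bar>a - b\<bar> \<le> lam"
  unfolding same_cell_def by (auto simp: algebra_simps)

lemma same_cell_between:
  assumes "same_cell lam a b" "min a b \<le> x" "x \<le> max a b"
  shows "same_cell lam x b"
proof -
  obtain m :: int where "a \<in> {lam * of_int m .. lam * (of_int m + 1)}" "b \<in> {lam * of_int m .. lam * (of_int m + 1)}"
    using assms(1) unfolding same_cell_def by blast
  hence "x \<in> {lam * of_int m .. lam * (of_int m + 1)}" using assms(2,3) by auto
  thus ?thesis unfolding same_cell_def using \<open>b \<in> _\<close> by blast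
qed

lemma same_cell_convex:
  assumes "same_cell lam a z" "same_cell lam b z" "min a b \<le> x" "x \<le> max a b"
  shows "same_cell lam x z"
proof (cases "x \<le> z")
  case True
  show ?thesis
    by (rule same_cell_between[of lam "min a b"]) (use assms True in \<open>auto simp: min_def\<close>)
next
  case False
  show ?thesis
    by (rule same_cell_between[of lam "max a b"]) (use assms False in \<open>auto simp: max_def\<close>)
qed

lemma same_cell_crossing:
  assumes "same_cell lam p z" "same_cell lam p' z'" "z < z'" "p' < p" "lam > 0"
    and "min p p' \<le> x" "x \<le> max p p'" "min z z' \<le> y" "y \<le> max z z'"
  shows "same_cell lam x y"
proof -
  obtain m where m: "p \<in> {lam * of_int m .. lam * (of_int m + 1)}" "z \<in> {lam * of_int m .. lam * (of_int m + 1)}"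
    using assms(1) unfolding same_cell_def by blast
  obtain m' where m': "p' \<in> {lam * of_int m' .. lam * (of_int m' + 1)}" "z' \<in> {lam * of_int m' .. lam * (of_int m' + 1)}"
    using assms(2) unfolding same_cell_def by blast
  have "lam * of_int m < lam * (of_int m' + 1)" "lam * of_int m' < lam * (of_int m + 1)"
    using m m' assms(3,4) by auto
  hence "of_int m < (of_int m' + 1 :: real)" "of_int m' < (of_int m + 1 :: real)"
    using assms(5) by simp_all
  hence "m = m'" by linarith
  hence "x \<in> {lam * of_int m .. lam * (of_int m + 1)}" "y \<in> {lam * of_int m .. lam * (of_int m + 1)}"
    using m m' assms(6-9) by auto
  thus ?thesis unfolding same_cell_def by blast
qed

lemma same_cell_clamp:
  assumes "same_cell lam p z" "same_cell lam p' z'" "p \<le> p'" "z \<le> y" "y \<le> z'" "lam > 0"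
  shows "same_cell lam (max p (min p' y)) y"
proof -
  consider "y < p" | "p \<le> y" "y \<le> p'" | "p' < y" by linarith
  thus ?thesis
  proof cases
    case 1
    have "same_cell lam y p"
      by (rule same_cell_between[OF same_cell_sym[OF assms(1)]]) (use 1 assms(4) in auto)
    thus ?thesis using 1 assms(3) same_cell_sym by (simp add: max_def)
  next
    case 2
    thus ?thesis using same_cell_refl[OF assms(6)] by simp
  next
    case 3
    have "same_cell lam y p'"
      by (rule same_cell_between[OF same_cell_sym[OF assms(2)]]) (use 3 assms(5) in auto)
    thus ?thesis using 3 assms(3) same_cell_sym by (simp add: max_def)
  qed
qed

definition ramp :: "real \<Rightarrow> real" where
  "ramp u = max 0 (min 1 u)"

lemma ramp_bounds: "0 \<le> ramp u" "ramp u \<le> 1"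
  unfolding ramp_def by auto

lemma ramp_eq_0 [simp]: "u \<le> 0 \<Longrightarrow> ramp u = 0"
  and ramp_eq_1 [simp]: "1 \<le> u \<Longrightarrow> ramp u = 1"
  unfolding ramp_def by auto

lemma mono_ramp: "mono ramp"
  unfolding ramp_def by (rule monoI) linarith

lemma continuous_on_ramp [continuous_intros]:
  "continuous_on S f \<Longrightarrow> continuous_on S (\<lambda>x. ramp (f x))"
  unfolding ramp_def by (intro continuous_intros)

lemma ramp_scale_le: "0 \<le> c \<Longrightarrow> ramp u * c \<le> c"
  using ramp_bounds[of u] by (simp add: mult_left_le_one_le)

lemma same_cell_path_mono:
  fixes \<omega> :: "real \<Rightarrow> real"
  assumes lam: "lam > 0" and pz: "same_cell lam p z" and pz': "same_cell lam p' z'"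
    and pp': "p \<le> p'" and zz': "z \<le> z'" and \<omega>: "continuous_on UNIV \<omega>" "mono \<omega>"
    and start: "\<And>u. u \<le> 1 \<Longrightarrow> \<omega> u = z" and stop: "\<And>u. 2 \<le> u \<Longrightarrow> \<omega> u = z'"
  obtains \<phi> where "\<phi> 0 = p" "\<phi> 3 = p'" "continuous_on UNIV \<phi>" "mono \<phi>"
    "\<And>u. same_cell lam (\<phi> u) (\<omega> u)"
proof
  define F where "F y = max p (min p' y)" for y
  define \<phi> where "\<phi> u = p + ramp u * (F z - p) + (F (\<omega> u) - F z) + ramp (u - 2) * (p' - F z')" for u
  have Fz: "same_cell lam (F z) z" and Fz': "same_cell lam (F z') z'"
    unfolding F_def using same_cell_clamp[OF pz pz' pp'] zz' lam by auto
  have F: "p \<le> F z" "F z' \<le> p'" "mono F"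
    unfolding F_def using pp' by (auto intro!: monoI)
  show "\<phi> 0 = p" "\<phi> 3 = p'"
    unfolding \<phi>_def using start stop by simp_all
  show "continuous_on UNIV \<phi>"
    unfolding \<phi>_def F_def by (intro continuous_intros \<omega>)
  show "mono \<phi>"
  proof (rule monoI)
    fix u v :: real assume "u \<le> v"
    have "ramp u * (F z - p) \<le> ramp v * (F z - p)" "ramp (u - 2) * (p' - F z') \<le> ramp (v - 2) * (p' - F z')"
      using F(1,2) \<open>u \<le> v\<close> by (auto intro!: mult_right_mono monoD[OF mono_ramp])
    moreover have "F (\<omega> u) \<le> F (\<omega> v)"
      using \<open>u \<le> v\<close> by (intro monoD[OF F(3)] monoD[OF \<omega>(2)])
    ultimately show "\<phi> u \<le> \<phi> v" unfolding \<phi>_def by linarith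
  qed
  fix u :: real
  consider "u \<le> 1" | "1 \<le> u" "u \<le> 2" | "2 \<le> u" by linarith
  thus "same_cell lam (\<phi> u) (\<omega> u)"
  proof cases
    case 1
    have "p \<le> \<phi> u" "\<phi> u \<le> F z"
      unfolding \<phi>_def using 1 start[OF 1] F(1) ramp_scale_le[of "F z - p" u] ramp_bounds[of u] by auto
    thus ?thesis using same_cell_convex[OF pz Fz] start[OF 1] by simp
  next
    case 2
    have "z \<le> \<omega> u" "\<omega> u \<le> z'"
      using monoD[OF \<omega>(2), of 1 u] monoD[OF \<omega>(2), of u 2] start[of 1] stop[of 2] 2 by auto
    moreover have "\<phi> u = F (\<omega> u)"
      unfolding \<phi>_def using 2 by simp
    ultimately show ?thesis
      unfolding F_def using same_cell_clamp[OF pz pz' pp'] lam by simp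
  next
    case 3
    have "F z' \<le> \<phi> u" "\<phi> u \<le> p'"
      unfolding \<phi>_def using 3 stop[OF 3] F(2) ramp_scale_le[of "p' - F z'" "u - 2"] ramp_bounds[of "u - 2"] by auto
    thus ?thesis using same_cell_convex[OF Fz' pz'] stop[OF 3] by simp
  qed
qed

lemma affine_between:
  fixes a b c :: real
  assumes "0 \<le> c" "c \<le> 1"
  shows "min a b \<le> a + c * (b - a)" "a + c * (b - a) \<le> max a b"
proof -
  have "c * (b - a) \<le> b - a \<and> 0 \<le> c * (b - a) \<or> b - a \<le> c * (b - a) \<and> c * (b - a) \<le> 0"
    using assms by (cases "a \<le> b") (auto simp: mult_left_le_one_le mult_nonneg_nonpos mult_le_cancel_right1)
  thus "min a b \<le> a + c * (b - a)" "a + c * (b - a) \<le> max a b" by auto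
qed

lemma same_cell_path_crossing:
  fixes \<omega> :: "real \<Rightarrow> real"
  assumes lam: "lam > 0" and pz: "same_cell lam p z" and pz': "same_cell lam p' z'"
    and crossing: "z < z' \<and> p' < p \<or> z' < z \<and> p < p'"
    and \<omega>: "\<And>u. min z z' \<le> \<omega> u \<and> \<omega> u \<le> max z z'"
  obtains \<phi> where "\<phi> 0 = p" "\<phi> 3 = p'" "continuous_on UNIV \<phi>" "mono \<phi> \<or> antimono \<phi>"
    "\<And>u. same_cell lam (\<phi> u) (\<omega> u)"
proof
  define \<phi> where "\<phi> u = p + ramp (u / 3) * (p' - p)" for u
  show "\<phi> 0 = p" "\<phi> 3 = p'" unfolding \<phi>_def by simp_all
  show "continuous_on UNIV \<phi>" unfolding \<phi>_def by (intro continuous_intros) simp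
  show "mono \<phi> \<or> antimono \<phi>"
    using crossing monoD[OF mono_ramp]
    by (auto simp: \<phi>_def intro!: monoI antimonoI mult_right_mono mult_right_mono_neg)
  fix u
  have "min p p' \<le> \<phi> u" "\<phi> u \<le> max p p'"
    unfolding \<phi>_def using affine_between[OF ramp_bounds] by blast+
  thus "same_cell lam (\<phi> u) (\<omega> u)"
    using crossing \<omega>[of u] same_cell_crossing[OF pz pz' _ _ lam] same_cell_crossing[OF pz' pz _ _ lam]
    by (auto simp: min.commute max.commute)
qed

text \<open>If \<open>p, p'\<close> are ordered like \<open>z, z'\<close>, then \<open>\<phi>\<close> is \<open>\<omega>\<close> clamped to the interval
  between \<open>p\<close> and \<open>p'\<close>, preceded and followed by straight segments while \<open>\<omega>\<close> rests at \<open>z\<close>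
  and at \<open>z'\<close>; otherwise all four points share one cell and a single straight segment works.\<close>
lemma same_cell_path:
  fixes \<omega> :: "real \<Rightarrow> real"
  assumes lam: "lam > 0" and pz: "same_cell lam p z" and pz': "same_cell lam p' z'"
    and \<omega>: "continuous_on UNIV \<omega>" "z \<le> z' \<Longrightarrow> mono \<omega>" "z' \<le> z \<Longrightarrow> antimono \<omega>"
    and start: "\<And>u. u \<le> 1 \<Longrightarrow> \<omega> u = z" and stop: "\<And>u. 2 \<le> u \<Longrightarrow> \<omega> u = z'"
  obtains \<phi> where "\<phi> 0 = p" "\<phi> 3 = p'" "continuous_on UNIV \<phi>" "mono \<phi> \<or> antimono \<phi>"
    "\<And>u. same_cell lam (\<phi> u) (\<omega> u)"
proof -
  consider "p \<le> p'" "z \<le> z'" | "p' \<le> p" "z' \<le> z" | "z < z' \<and> p' < p \<or> z' < z \<and> p < p'"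
    by linarith
  thus thesis
  proof cases
    case 1
    obtain \<phi> where \<phi>: "\<phi> 0 = p" "\<phi> 3 = p'" "continuous_on UNIV \<phi>" "mono \<phi>"
      "\<And>u. same_cell lam (\<phi> u) (\<omega> u)"
      using same_cell_path_mono[OF lam pz pz' 1 \<omega>(1) \<omega>(2)[OF 1(2)] start stop] by blast
    show thesis
      by (rule that[OF \<phi>(1-3) _ \<phi>(5)]) (use \<phi>(4) in blast)
  next
    case 2
    have "- p \<le> - p'" "- z \<le> - z'" using 2 by simp_all
    moreover have "continuous_on UNIV (\<lambda>u. - \<omega> u)" using \<omega>(1) by (intro continuous_intros)
    moreover have "mono (\<lambda>u. - \<omega> u)" using antimonoD[OF \<omega>(3)[OF 2(2)]] by (intro monoI) simp
    moreover have "\<And>u. u \<le> 1 \<Longrightarrow> - \<omega> u = - z" "\<And>u. 2 \<le> u \<Longrightarrow> - \<omega> u = - z'"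
      using start stop by simp_all
    ultimately obtain \<psi> where \<psi>: "\<psi> 0 = - p" "\<psi> 3 = - p'" "continuous_on UNIV \<psi>" "mono \<psi>"
      "\<And>u. same_cell lam (\<psi> u) (- \<omega> u)"
      using same_cell_path_mono[OF lam same_cell_uminus[OF pz] same_cell_uminus[OF pz']] by blast
    show thesis
    proof (rule that[of "\<lambda>u. - \<psi> u"])
      show "continuous_on UNIV (\<lambda>u. - \<psi> u)" using \<psi>(3) by (intro continuous_intros)
      show "mono (\<lambda>u. - \<psi> u) \<or> antimono (\<lambda>u. - \<psi> u)"
        using monoD[OF \<psi>(4)] by (intro disjI2 antimonoI) simp
      show "same_cell lam (- \<psi> u) (\<omega> u)" for u
        using same_cell_uminus[OF \<psi>(5)[of u]] by simp
    qed (use \<psi> in auto)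
  next
    case 3
    have \<omega>_between: "min z z' \<le> \<omega> u \<and> \<omega> u \<le> max z z'" for u
    proof -
      consider "u \<le> 1" | "1 \<le> u" "u \<le> 2" | "2 \<le> u" by linarith
      thus ?thesis
      proof cases
        case 2
        have "z \<le> z' \<Longrightarrow> \<omega> 1 \<le> \<omega> u \<and> \<omega> u \<le> \<omega> 2" "z' \<le> z \<Longrightarrow> \<omega> 2 \<le> \<omega> u \<and> \<omega> u \<le> \<omega> 1"
          using 2 \<omega>(2,3) by (auto dest: monoD antimonoD)
        thus ?thesis using start[of 1] stop[of 2] by linarith
      qed (use start stop in auto)
    qed
    show thesis
      by (rule same_cell_path_crossing[OF lam pz pz' 3 \<omega>_between]) (rule that)
  qed
qed

lemma l1dist_nonneg: "0 \<le> l1dist x y"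
  unfolding l1dist_def by (simp add: sum_nonneg)

lemma l1dist_commute: "l1dist x y = l1dist y x"
  unfolding l1dist_def by (simp add: abs_minus_commute)

lemma l1dist_self [simp]: "l1dist x x = 0"
  unfolding l1dist_def by simp

lemma l1dist_eq_0_iff [simp]: "l1dist x y = 0 \<longleftrightarrow> x = y"
  unfolding l1dist_def by (simp add: sum_nonneg_eq_0_iff vec_eq_iff)

lemma abs_component_le_l1dist: "\<bar>x$i - y$i\<bar> \<le> l1dist x y"
  unfolding l1dist_def by (rule member_le_sum) auto

lemma l1dist_additive_iff:
  "l1dist x z = l1dist x y + l1dist y z \<longleftrightarrow> (\<forall>i. \<bar>x$i - z$i\<bar> = \<bar>x$i - y$i\<bar> + \<bar>y$i - z$i\<bar>)"
proof -
  have "l1dist x y + l1dist y z - l1dist x z = (\<Sum>i\<in>UNIV. \<bar>x$i - y$i\<bar> + \<bar>y$i - z$i\<bar> - \<bar>x$i - z$i\<bar>)"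
    unfolding l1dist_def by (simp add: sum.distrib sum_subtractf)
  moreover have "\<forall>i\<in>UNIV. 0 \<le> \<bar>x$i - y$i\<bar> + \<bar>y$i - z$i\<bar> - \<bar>x$i - z$i\<bar>" by auto
  ultimately show ?thesis
    by (auto simp: sum_nonneg_eq_0_iff)
qed

lemma l1_geodesic_component_monotone:
  fixes \<gamma> :: "real \<Rightarrow> real^'n"
  assumes iso: "\<forall>t\<in>{0..D}. \<forall>t'\<in>{0..D}. l1dist (\<gamma> t) (\<gamma> t') = \<bar>t - t'\<bar>"
  shows "\<gamma> 0 $ i \<le> \<gamma> D $ i \<Longrightarrow> mono_on {0..D} (\<lambda>t. \<gamma> t $ i)"
    and "\<gamma> D $ i \<le> \<gamma> 0 $ i \<Longrightarrow> antimono_on {0..D} (\<lambda>t. \<gamma> t $ i)"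
proof -
  have between: "\<bar>\<gamma> 0$i - \<gamma> t$i\<bar> = \<bar>\<gamma> 0$i - \<gamma> s$i\<bar> + \<bar>\<gamma> s$i - \<gamma> t$i\<bar>
      \<and> \<bar>\<gamma> s$i - \<gamma> D$i\<bar> = \<bar>\<gamma> s$i - \<gamma> t$i\<bar> + \<bar>\<gamma> t$i - \<gamma> D$i\<bar>"
    if "s \<in> {0..D}" "t \<in> {0..D}" "s \<le> t" for s t
  proof -
    have "l1dist (\<gamma> 0) (\<gamma> t) = l1dist (\<gamma> 0) (\<gamma> s) + l1dist (\<gamma> s) (\<gamma> t)"
      "l1dist (\<gamma> s) (\<gamma> D) = l1dist (\<gamma> s) (\<gamma> t) + l1dist (\<gamma> t) (\<gamma> D)"
      using iso that by auto
    thus ?thesis unfolding l1dist_additive_iff by blast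
  qed
  show "\<gamma> 0 $ i \<le> \<gamma> D $ i \<Longrightarrow> mono_on {0..D} (\<lambda>t. \<gamma> t $ i)"
    by (rule mono_onI) (use between in fastforce)
  show "\<gamma> D $ i \<le> \<gamma> 0 $ i \<Longrightarrow> antimono_on {0..D} (\<lambda>t. \<gamma> t $ i)"
    by (rule monotone_onI) (use between in fastforce)
qed

lemma l1_geodesic_component_lipschitz:
  fixes \<gamma> :: "real \<Rightarrow> real^'n"
  assumes iso: "\<forall>t\<in>{0..D}. \<forall>t'\<in>{0..D}. l1dist (\<gamma> t) (\<gamma> t') = \<bar>t - t'\<bar>"
  shows "1-lipschitz_on {0..D} (\<lambda>t. \<gamma> t $ i)"
proof (rule lipschitz_onI)
  fix s t assume "s \<in> {0..D}" "t \<in> {0..D}"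
  thus "dist (\<gamma> s $ i) (\<gamma> t $ i) \<le> 1 * dist s t"
    using abs_component_le_l1dist[of "\<gamma> s" i "\<gamma> t"] iso by (simp add: dist_real_def)
qed simp

lemma l1_convex_padded_path:
  fixes Z :: "(real^'n) set"
  assumes "l1_convex Z" "z \<in> Z" "z' \<in> Z"
  obtains w :: "real \<Rightarrow> real^'n" where "\<And>u. w u \<in> Z" "\<And>u. u \<le> 1 \<Longrightarrow> w u = z" "\<And>u. 2 \<le> u \<Longrightarrow> w u = z'"
    "\<And>i. continuous_on UNIV (\<lambda>u. w u $ i)"
    "\<And>i. z$i \<le> z'$i \<Longrightarrow> mono (\<lambda>u. w u $ i)" "\<And>i. z'$i \<le> z$i \<Longrightarrow> antimono (\<lambda>u. w u $ i)"
proof -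
  define D where "D = l1dist z z'"
  obtain \<gamma> :: "real \<Rightarrow> real^'n" where \<gamma>: "\<gamma> 0 = z" "\<gamma> D = z'" "\<forall>t\<in>{0..D}. \<gamma> t \<in> Z"
    and iso: "\<forall>t\<in>{0..D}. \<forall>t'\<in>{0..D}. l1dist (\<gamma> t) (\<gamma> t') = \<bar>t - t'\<bar>"
    using assms unfolding l1_convex_def D_def by blast
  define \<tau> where "\<tau> u = D * ramp (u - 1)" for u
  have \<tau>: "\<tau> u \<in> {0..D}" for u
    unfolding \<tau>_def using l1dist_nonneg[of z z'] ramp_bounds[of "u - 1"]
    by (auto simp: D_def mult_left_le)
  have mono_\<tau>: "mono \<tau>"
    unfolding \<tau>_def using l1dist_nonneg[of z z'] monoD[OF mono_ramp]
    by (auto simp: D_def intro!: monoI mult_left_mono)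
  show thesis
  proof (rule that[of "\<lambda>u. \<gamma> (\<tau> u)"])
    show "\<gamma> (\<tau> u) \<in> Z" for u using \<gamma>(3) \<tau> by blast
    show "u \<le> 1 \<Longrightarrow> \<gamma> (\<tau> u) = z" "2 \<le> u \<Longrightarrow> \<gamma> (\<tau> u) = z'" for u
      using \<gamma>(1,2) by (simp_all add: \<tau>_def)
    show "continuous_on UNIV (\<lambda>u. \<gamma> (\<tau> u) $ i)" for i
      by (rule continuous_on_compose2[OF lipschitz_on_continuous_on[OF l1_geodesic_component_lipschitz[OF iso]]])
         (use \<tau> in \<open>auto simp: \<tau>_def intro!: continuous_intros\<close>)
    show "mono (\<lambda>u. \<gamma> (\<tau> u) $ i)" if "z$i \<le> z'$i" for i
      using mono_onD[OF l1_geodesic_component_monotone(1)[OF iso], of i] that \<gamma>(1,2) \<tau> monoD[OF mono_\<tau>]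
      by (intro monoI) simp
    show "antimono (\<lambda>u. \<gamma> (\<tau> u) $ i)" if "z'$i \<le> z$i" for i
      using monotone_onD[OF l1_geodesic_component_monotone(2)[OF iso], of i] that \<gamma>(1,2) \<tau> monoD[OF mono_\<tau>]
      by (intro antimonoI) simp
  qed
qed

text \<open>Along a coordinatewise monotone path the \<open>\<ell>\<^sub>1\<close> distance is additive, so the distance
  from the start point is an arclength parameter; an inverse of it (by the intermediate value
  theorem) reparametrises the path as a geodesic.\<close>
lemma l1_geodesic_of_monotone_path:
  fixes f :: "real \<Rightarrow> real^'n"
  assumes ab: "a \<le> b" and cont: "\<And>i. continuous_on {a..b} (\<lambda>u. f u $ i)"
    and mono: "\<And>i. mono_on {a..b} (\<lambda>u. f u $ i) \<or> antimono_on {a..b} (\<lambda>u. f u $ i)"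
  obtains \<gamma> where "\<gamma> 0 = f a" "\<gamma> (l1dist (f a) (f b)) = f b"
    "\<gamma> ` {0..l1dist (f a) (f b)} \<subseteq> f ` {a..b}"
    "\<forall>t\<in>{0..l1dist (f a) (f b)}. \<forall>t'\<in>{0..l1dist (f a) (f b)}. l1dist (\<gamma> t) (\<gamma> t') = \<bar>t - t'\<bar>"
proof -
  define L where "L u = l1dist (f a) (f u)" for u
  define D where "D = L b"
  have additive: "l1dist (f u) (f w) = l1dist (f u) (f v) + l1dist (f v) (f w)"
    if "u \<in> {a..b}" "w \<in> {a..b}" "u \<le> v" "v \<le> w" for u v w
    unfolding l1dist_additive_iff
  proof
    fix i
    have v: "v \<in> {a..b}" using that by auto
    from mono[of i] have "f u $ i \<le> f v $ i \<and> f v $ i \<le> f w $ i \<or> f w $ i \<le> f v $ i \<and> f v $ i \<le> f u $ i"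
      using monotone_onD[of "{a..b}" _ _ "\<lambda>u. f u $ i", OF _ that(1) v] monotone_onD[of "{a..b}" _ _ "\<lambda>u. f u $ i", OF _ v that(2)]
        that(3,4) by blast
    thus "\<bar>f u $ i - f w $ i\<bar> = \<bar>f u $ i - f v $ i\<bar> + \<bar>f v $ i - f w $ i\<bar>" by linarith
  qed
  have dist_eq: "l1dist (f u) (f v) = \<bar>L u - L v\<bar>" if "u \<in> {a..b}" "v \<in> {a..b}" for u v
    using additive[of a u v] additive[of a v u] that l1dist_nonneg[of "f u" "f v"] l1dist_commute[of "f u" "f v"]
    unfolding L_def by (cases "u \<le> v") auto
  have "continuous_on {a..b} L"
    unfolding L_def l1dist_def by (intro continuous_intros cont)
  moreover have "L a = 0" unfolding L_def by simp
  ultimately have "\<exists>u. u \<in> {a..b} \<and> L u = s" if "s \<in> {0..D}" for s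
    using IVT'[of L a s b] that ab unfolding D_def by auto
  then obtain \<sigma> where \<sigma>: "\<And>s. s \<in> {0..D} \<Longrightarrow> \<sigma> s \<in> {a..b} \<and> L (\<sigma> s) = s"
    by metis
  have same_point: "f u = f v" if "u \<in> {a..b}" "v \<in> {a..b}" "L u = L v" for u v
    using dist_eq[OF that(1,2)] that(3) by simp
  have "0 \<le> D" unfolding D_def L_def by (rule l1dist_nonneg)
  show thesis
  proof (rule that[of "\<lambda>s. f (\<sigma> s)"], fold L_def D_def)
    show "f (\<sigma> 0) = f a" "f (\<sigma> D) = f b"
      using \<sigma>[of 0] \<sigma>[of D] \<open>0 \<le> D\<close> \<open>L a = 0\<close> ab by (auto intro!: same_point simp: D_def)
    show "(\<lambda>s. f (\<sigma> s)) ` {0..D} \<subseteq> f ` {a..b}"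
      using \<sigma> by blast
    show "\<forall>t\<in>{0..D}. \<forall>t'\<in>{0..D}. l1dist (f (\<sigma> t)) (f (\<sigma> t')) = \<bar>t - t'\<bar>"
      using \<sigma> dist_eq by simp
  qed
qed

lemma l1_convexI_monotone_paths:
  fixes S :: "(real^'n) set"
  assumes "\<And>p p'. p \<in> S \<Longrightarrow> p' \<in> S \<Longrightarrow> \<exists>(f :: real \<Rightarrow> real^'n) a b. a \<le> b \<and> f a = p \<and> f b = p' \<and> f ` {a..b} \<subseteq> S \<and>
      (\<forall>i. continuous_on {a..b} (\<lambda>u. f u $ i) \<and>
        (mono_on {a..b} (\<lambda>u. f u $ i) \<or> antimono_on {a..b} (\<lambda>u. f u $ i)))"
  shows "l1_convex S"
  unfolding l1_convex_def
proof (intro ballI)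
  fix p p' assume "p \<in> S" "p' \<in> S"
  from assms[OF this] obtain f :: "real \<Rightarrow> real^'n" and a b where f: "a \<le> b" "f a = p" "f b = p'" "f ` {a..b} \<subseteq> S"
    and regular: "\<forall>i. continuous_on {a..b} (\<lambda>u. f u $ i) \<and>
      (mono_on {a..b} (\<lambda>u. f u $ i) \<or> antimono_on {a..b} (\<lambda>u. f u $ i))"
    by blast
  have cont: "\<And>i. continuous_on {a..b} (\<lambda>u. f u $ i)"
    and mono: "\<And>i. mono_on {a..b} (\<lambda>u. f u $ i) \<or> antimono_on {a..b} (\<lambda>u. f u $ i)"
    using regular by blast+
  obtain \<gamma> where \<gamma>: "\<gamma> 0 = p" "\<gamma> (l1dist p p') = p'" "\<gamma> ` {0..l1dist p p'} \<subseteq> f ` {a..b}"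
    "\<forall>t\<in>{0..l1dist p p'}. \<forall>t'\<in>{0..l1dist p p'}. l1dist (\<gamma> t) (\<gamma> t') = \<bar>t - t'\<bar>"
    using l1_geodesic_of_monotone_path[OF f(1) cont mono] unfolding f(2,3) by blast
  have "\<forall>t\<in>{0..l1dist p p'}. \<gamma> t \<in> S"
    using \<gamma>(3) f(4) by blast
  with \<gamma>(1,2,4) show "\<exists>\<gamma>. \<gamma> 0 = p \<and> \<gamma> (l1dist p p') = p' \<and> (\<forall>t\<in>{0..l1dist p p'}. \<gamma> t \<in> S) \<and>
      (\<forall>t\<in>{0..l1dist p p'}. \<forall>t'\<in>{0..l1dist p p'}. l1dist (\<gamma> t) (\<gamma> t') = \<bar>t - t'\<bar>)"
    by blast
qed

text \<open>The union of all \<open>\<lambda>\<close>-pixels meeting \<open>Z\<close>, described coordinatewise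
  (see \<open>pixel_hull_eq_Union_pixels\<close>).\<close>
definition pixel_hull :: "real \<Rightarrow> (real^'n) set \<Rightarrow> (real^'n) set" where
  "pixel_hull lam Z = {x. \<exists>z\<in>Z. \<forall>i. same_cell lam (x$i) (z$i)}"

lemma subset_pixel_hull: "lam > 0 \<Longrightarrow> Z \<subseteq> pixel_hull lam Z"
  unfolding pixel_hull_def using same_cell_refl by blast

lemma l1_convex_pixel_hull:
  fixes Z :: "(real^'n) set"
  assumes lam: "lam > 0" and "l1_convex Z"
  shows "l1_convex (pixel_hull lam Z)"
proof (rule l1_convexI_monotone_paths)
  fix p p' assume "p \<in> pixel_hull lam Z" "p' \<in> pixel_hull lam Z"
  then obtain z z' where z: "z \<in> Z" "\<And>i. same_cell lam (p$i) (z$i)"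
    and z': "z' \<in> Z" "\<And>i. same_cell lam (p'$i) (z'$i)"
    unfolding pixel_hull_def by blast
  obtain w :: "real \<Rightarrow> real^'n" where w: "\<And>u. w u \<in> Z" "\<And>u. u \<le> 1 \<Longrightarrow> w u = z" "\<And>u. 2 \<le> u \<Longrightarrow> w u = z'"
    "\<And>i. continuous_on UNIV (\<lambda>u. w u $ i)"
    "\<And>i. z$i \<le> z'$i \<Longrightarrow> mono (\<lambda>u. w u $ i)" "\<And>i. z'$i \<le> z$i \<Longrightarrow> antimono (\<lambda>u. w u $ i)"
    using l1_convex_padded_path[OF assms(2) z(1) z'(1)] by blast
  have "\<exists>\<phi> :: real \<Rightarrow> real. \<phi> 0 = p$i \<and> \<phi> 3 = p'$i \<and> continuous_on UNIV \<phi> \<and> (mono \<phi> \<or> antimono \<phi>)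
      \<and> (\<forall>u. same_cell lam (\<phi> u) (w u $ i))" for i
    by (rule same_cell_path[OF lam z(2) z'(2) w(4,5,6)]) (use w(2,3) in auto)
  then obtain \<Phi> where \<Phi>: "\<And>i. \<Phi> i 0 = p$i" "\<And>i. \<Phi> i 3 = p'$i" "\<And>i. continuous_on UNIV (\<Phi> i)"
    "\<And>i. mono (\<Phi> i) \<or> antimono (\<Phi> i)" "\<And>i u. same_cell lam (\<Phi> i u) (w u $ i)"
    by metis
  define f where "f u = (\<chi> i. \<Phi> i u)" for u
  have "f 0 = p" "f 3 = p'"
    unfolding f_def using \<Phi>(1,2) by (simp_all add: vec_eq_iff)
  moreover have "f u \<in> pixel_hull lam Z" for u
    unfolding pixel_hull_def f_def using w(1) \<Phi>(5) by auto
  hence "f ` {0..3} \<subseteq> pixel_hull lam Z" by blast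
  moreover have "continuous_on {0..3} (\<lambda>u. f u $ i) \<and>
      (mono_on {0..3} (\<lambda>u. f u $ i) \<or> antimono_on {0..3} (\<lambda>u. f u $ i))" for i
  proof -
    have f_i: "(\<lambda>u. f u $ i) = \<Phi> i" unfolding f_def by simp
    show ?thesis unfolding f_i
    proof
      show "continuous_on {0..3} (\<Phi> i)" using continuous_on_subset[OF \<Phi>(3)] by simp
      show "mono_on {0..3} (\<Phi> i) \<or> antimono_on {0..3} (\<Phi> i)"
        using \<Phi>(4)[of i] monotone_on_subset[OF _ subset_UNIV] by metis
    qed
  qed
  ultimately show "\<exists>(f :: real \<Rightarrow> real^'n) a b. a \<le> b \<and> f a = p \<and> f b = p' \<and> f ` {a..b} \<subseteq> pixel_hull lam Z \<and>
      (\<forall>i. continuous_on {a..b} (\<lambda>u. f u $ i) \<and>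
        (mono_on {a..b} (\<lambda>u. f u $ i) \<or> antimono_on {a..b} (\<lambda>u. f u $ i)))"
    by (intro exI[of _ f] exI[of _ 0] exI[of _ 3]) simp
qed

lemma mem_pixel_iff:
  assumes "lam > 0"
  shows "x \<in> pixel lam h \<longleftrightarrow> (\<forall>i. lam * (h$i - 1/2) \<le> x$i \<and> x$i \<le> lam * (h$i + 1/2))"
proof -
  have "x \<in> pixel lam h \<longleftrightarrow> inverse lam *\<^sub>R x - h \<in> unit_cube"
    unfolding pixel_def using assms by (auto intro!: exI[of _ "inverse lam *\<^sub>R x - h"])
  also have "\<dots> \<longleftrightarrow> (\<forall>i. lam * (h$i - 1/2) \<le> x$i \<and> x$i \<le> lam * (h$i + 1/2))"
    unfolding unit_cube_def abs_le_iff using assms by (auto simp: field_simps)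
  finally show ?thesis .
qed

lemma pixel_hull_eq_Union_pixels:
  assumes lam: "lam > 0"
  shows "pixel_hull lam Z = (\<Union>h\<in>{h. half_int_point h \<and> pixel lam h \<inter> Z \<noteq> {}}. pixel lam h)"
proof (intro equalityI subsetI)
  fix x assume "x \<in> pixel_hull lam Z"
  then obtain z where z: "z \<in> Z" "\<And>i. same_cell lam (x$i) (z$i)"
    unfolding pixel_hull_def by blast
  then obtain m :: "'a \<Rightarrow> int" where m: "\<And>i. x$i \<in> {lam * of_int (m i) .. lam * (of_int (m i) + 1)}"
    "\<And>i. z$i \<in> {lam * of_int (m i) .. lam * (of_int (m i) + 1)}"
    unfolding same_cell_def by metis
  define h :: "real^'a" where "h = (\<chi> i. of_int (m i) + 1/2)"
  have "half_int_point h" unfolding half_int_point_def h_def by auto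
  moreover have "x \<in> pixel lam h" "z \<in> pixel lam h"
    unfolding mem_pixel_iff[OF lam] h_def using m by (auto simp: algebra_simps)
  ultimately show "x \<in> (\<Union>h\<in>{h. half_int_point h \<and> pixel lam h \<inter> Z \<noteq> {}}. pixel lam h)"
    using z(1) by blast
next
  fix x assume "x \<in> (\<Union>h\<in>{h. half_int_point h \<and> pixel lam h \<inter> Z \<noteq> {}}. pixel lam h)"
  then obtain h z where h: "half_int_point h" "z \<in> Z" "z \<in> pixel lam h" "x \<in> pixel lam h"
    by blast
  have "same_cell lam (x$i) (z$i)" for i
  proof -
    obtain m :: int where m: "h$i = of_int m + 1/2" using h(1) unfolding half_int_point_def by blast
    have "x$i \<in> {lam * (h$i - 1/2) .. lam * (h$i + 1/2)}" "z$i \<in> {lam * (h$i - 1/2) .. lam * (h$i + 1/2)}"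
      using h(3,4) unfolding mem_pixel_iff[OF lam] by auto
    thus ?thesis unfolding same_cell_def m by (intro exI[of _ m]) (simp add: algebra_simps)
  qed
  thus "x \<in> pixel_hull lam Z" unfolding pixel_hull_def using h(2) by blast
qed

lemma finite_vec_components:
  assumes "finite S"
  shows "finite {x :: 'a^'n. \<forall>i. x$i \<in> S}"
proof -
  have "{x :: 'a^'n. \<forall>i. x$i \<in> S} \<subseteq> vec_lambda ` (UNIV \<rightarrow>\<^sub>E S)"
  proof
    fix x :: "'a^'n" assume "x \<in> {x. \<forall>i. x$i \<in> S}"
    hence "vec_nth x \<in> UNIV \<rightarrow>\<^sub>E S" by auto
    thus "x \<in> vec_lambda ` (UNIV \<rightarrow>\<^sub>E S)" by (metis image_eqI vec_nth_inverse)
  qed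
  thus ?thesis
    by (rule finite_subset) (intro finite_imageI finite_PiE; simp add: assms)
qed

lemma finite_pixels_meeting_bounded:
  fixes Z :: "(real^'n) set"
  assumes lam: "lam > 0" and "bounded Z"
  shows "finite {h. half_int_point h \<and> pixel lam h \<inter> Z \<noteq> {}}"
proof -
  obtain B where B: "\<And>z. z \<in> Z \<Longrightarrow> norm z \<le> B" using assms(2) bounded_iff by blast
  define N where "N = \<lceil>B / lam\<rceil> + 1"
  define S where "S = (\<lambda>m::int. of_int m + (1/2 :: real)) ` {-N..N}"
  have "{h. half_int_point h \<and> pixel lam h \<inter> Z \<noteq> {}} \<subseteq> {h :: real^'n. \<forall>i. h$i \<in> S}"
  proof (intro subsetI CollectI allI)
    fix h :: "real^'n" and i assume "h \<in> {h. half_int_point h \<and> pixel lam h \<inter> Z \<noteq> {}}"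
    then obtain z where h: "half_int_point h" "z \<in> Z" "z \<in> pixel lam h" by blast
    obtain m :: int where m: "h$i = of_int m + 1/2" using h(1) unfolding half_int_point_def by blast
    have "\<bar>z$i\<bar> \<le> B" using B[OF h(2)] component_le_norm_cart[of z i] by linarith
    moreover have "lam * (h$i - 1/2) \<le> z$i" "z$i \<le> lam * (h$i + 1/2)"
      using h(3) unfolding mem_pixel_iff[OF lam] by auto
    ultimately have "of_int m * lam \<le> B" "- B \<le> (of_int m + 1) * lam"
      unfolding m by (simp_all add: algebra_simps)
    hence "of_int m \<le> B / lam" "- (B / lam) \<le> of_int m + 1"
      using lam by (simp_all add: pos_le_divide_eq field_simps)
    moreover have "B / lam \<le> of_int \<lceil>B / lam\<rceil>" by (rule le_of_int_ceiling)
    ultimately have "of_int (- N) \<le> (of_int m :: real)" "of_int m \<le> (of_int N :: real)"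
      unfolding N_def of_int_add of_int_minus of_int_1 by linarith+
    hence "m \<in> {-N..N}" by (simp only: of_int_le_iff atLeastAtMost_iff)
    thus "h$i \<in> S" unfolding S_def m by blast
  qed
  moreover have "finite S" unfolding S_def by simp
  ultimately show ?thesis using finite_vec_components finite_subset by blast
qed

lemma pixellated_pixel_hull:
  assumes "lam > 0" "bounded Z"
  shows "pixellated (pixel_hull lam Z)"
  unfolding pixellated_def lambda_pixellated_def
proof (intro exI[of _ lam] conjI)
  show "\<exists>F. finite F \<and> (\<forall>h\<in>F. half_int_point h) \<and> pixel_hull lam Z = (\<Union>h\<in>F. pixel lam h)"
    using finite_pixels_meeting_bounded[OF assms] pixel_hull_eq_Union_pixels[OF assms(1)]
    by (intro exI[of _ "{h. half_int_point h \<and> pixel lam h \<inter> Z \<noteq> {}}"]) simp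
qed (rule assms(1))

lemma l1_thickenI:
  assumes "y \<in> Y" "0 < \<delta>" "l1dist x y \<le> \<delta>"
  shows "x \<in> l1_thicken Y \<delta>"
proof -
  define b where "b = inverse \<delta> *\<^sub>R (x - y)"
  have "x = y + \<delta> *\<^sub>R b" unfolding b_def using assms(2) by simp
  moreover have "(\<Sum>i\<in>UNIV. \<bar>b$i\<bar>) = l1dist x y / \<delta>"
    unfolding b_def l1dist_def using assms(2) by (simp add: sum_divide_distrib abs_mult field_simps)
  hence "b \<in> l1_ball" unfolding l1_ball_def using assms(2,3) by simp
  ultimately show ?thesis unfolding l1_thicken_def using assms(1) by blast
qed

lemma l1_hausdist_le:
  assumes "0 < \<delta>" "X \<subseteq> l1_thicken Y \<delta>" "Y \<subseteq> l1_thicken X \<delta>"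
  shows "l1_hausdist X Y \<le> \<delta>"
  unfolding l1_hausdist_def
proof (rule cInf_lower)
  show "bdd_below {\<delta>. 0 < \<delta> \<and> X \<subseteq> l1_thicken Y \<delta> \<and> Y \<subseteq> l1_thicken X \<delta>}"
    by (rule bdd_belowI[of _ 0]) simp
qed (use assms in simp)

lemma l1_hausdist_pixel_hull_le:
  fixes Z :: "(real^'n) set"
  assumes lam: "lam > 0"
  shows "l1_hausdist Z (pixel_hull lam Z) \<le> real CARD('n) * lam"
proof (rule l1_hausdist_le)
  show \<delta>: "0 < real CARD('n) * lam" using lam by simp
  show "Z \<subseteq> l1_thicken (pixel_hull lam Z) (real CARD('n) * lam)"
  proof
    fix z assume "z \<in> Z"
    thus "z \<in> l1_thicken (pixel_hull lam Z) (real CARD('n) * lam)"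
      using subset_pixel_hull[OF lam] \<delta> by (intro l1_thickenI[OF _ \<delta>]) auto
  qed
  show "pixel_hull lam Z \<subseteq> l1_thicken Z (real CARD('n) * lam)"
  proof
    fix x assume "x \<in> pixel_hull lam Z"
    then obtain z where z: "z \<in> Z" "\<And>i. same_cell lam (x$i) (z$i)"
      unfolding pixel_hull_def by blast
    have "l1dist x z \<le> (\<Sum>i\<in>(UNIV::'n set). lam)"
      unfolding l1dist_def by (rule sum_mono) (use same_cell_dist z(2) in auto)
    thus "x \<in> l1_thicken Z (real CARD('n) * lam)" using l1_thickenI[OF z(1) \<delta>] by simp
  qed
qed

theorem theorem3p2:
  fixes Z :: "(real^'n) set" and \<epsilon> :: real
  assumes "compact Z" and "Z \<noteq> {}" and "l1_convex Z" and "\<epsilon> > 0"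
  shows "\<exists>P :: (real^'n) set. P \<noteq> {} \<and> pixellated P \<and> l1_convex P \<and> l1_hausdist Z P < \<epsilon>"
proof -
  define lam where "lam = \<epsilon> / (2 * CARD('n))"
  have lam: "lam > 0" unfolding lam_def using \<open>\<epsilon> > 0\<close> by simp
  have "pixel_hull lam Z \<noteq> {}" using subset_pixel_hull[OF lam] \<open>Z \<noteq> {}\<close> by blast
  moreover have "pixellated (pixel_hull lam Z)"
    using pixellated_pixel_hull[OF lam compact_imp_bounded[OF \<open>compact Z\<close>]] .
  moreover have "l1_convex (pixel_hull lam Z)"
    using l1_convex_pixel_hull[OF lam \<open>l1_convex Z\<close>] .
  moreover have "l1_hausdist Z (pixel_hull lam Z) < \<epsilon>"
    using l1_hausdist_pixel_hull_le[OF lam, of Z] \<open>\<epsilon> > 0\<close> by (simp add: lam_def)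
  ultimately show ?thesis by blast
qed

end
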